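(* Let $N\ge1$. There exist $n=(N+1)(N+2)/2$ real triples $(b_i,c_i,d_i)$, $i=1,\dots,n$ (for instance $d_i=1$ and $(b_i,c_i)=(b_j,c_k)$ ranging over all pairs with $j,k\in\mathbb{Z}_{\ge0}$, $j+k\le N$, where $b_0,\dots,b_N$ are pairwise distinct reals and $c_0,\dots,c_N$ are pairwise distinct reals), such that, with $A_i=b_i\sigma_X+c_i\sigma_Y+d_i\sigma_Z$, every permutation-invariant Hermitian operator $\rho$ on $N$ qubits (in particular the projector $|\Psi^{PI}\rangle\langle\Psi^{PI}|$ onto any permutation-invariant pure state) can be written as $$\rho=\sum_{i=1}^{n}\sum_{j=0}^{N}\alpha_{ij}\sum_{\pi}\mathbb{I}^{\otimes j}\otimes A_i^{\otimes (N-j)}$$ with real coefficients $\alpha_{ij}$. Consequently, for every state $\sigma$, the fidelity $\langle\Psi^{PI}|\sigma|\Psi^{PI}\rangle$ is a fixed linear combination of expectation values obtainable from the $n$ local measurement settings $A_i^{\otimes N}$; i.e., $C_S(\rho)\le (N+1)(N+2)/2$ for every permutation-invariant $\rho$.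
   Context: $\mathbb{I},\sigma_X,\sigma_Y,\sigma_Z$ are the identity and Pauli matrices. An $N$-qubit operator $\rho$ is permutation invariant (PI) if $P(\pi)\rho P(\pi)^\dagger=\rho$ for all $\pi\in S_N$, where $P(\pi)$ permutes tensor factors. The notation $\sum_\pi \mathbb{I}^{\otimes j}\otimes A^{\otimes(N-j)}$ denotes the sum, over all distinct placements, of tensor products in which exactly $j$ of the $N$ factors are $\mathbb{I}$ and the other $N-j$ are $A$ (each distinct arrangement counted once). A local measurement setting (LMS) is an operator $A^{\otimes N}$ with $A=b\sigma_X+c\sigma_Y+d\sigma_Z$, $b,c,d\in\mathbb{R}$; from it all the expectations $\langle\sum_\pi\mathbb{I}^{\otimes j}\otimes A^{\otimes(N-j)}\rangle$ are obtainable. Measurement complexity: for an $N$-qubit PI operator $\rho$, $C_S(\rho)$ is the minimal $n_A$ such that there exist real $b_i,c_i,d_i$ and real $\alpha_{ij}$ ($1\le i\le n_A$, $0\le j\le N$) with $\rho=\sum_{i=1}^{n_A}\sum_{j=0}^{N}\alpha_{ij}\sum_\pi\mathbb{I}^{\otimes j}\otimes A_i^{\otimes(N-j)}$, $A_i=b_i\sigma_X+c_i\sigma_Y+d_i\sigma_Z$. *)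

theory Defs
  imports "HOL-Analysis.Analysis" "HOL-Combinatorics.Permutations"
begin

text \<open>Single-qubit operators: 2x2 complex matrices indexed by bool
  (False = |0>, True = |1>), entry (row, column).
  N-qubit operators: functions on pairs of bit strings (bool lists);
  only entries with both lists of length N are meaningful.\<close>

type_synonym qop = "bool \<Rightarrow> bool \<Rightarrow> complex"
type_synonym nop = "bool list \<Rightarrow> bool list \<Rightarrow> complex"

definition idq :: qop where
  "idq x y = (if x = y then 1 else 0)"

definition sigmaX :: qop where
  "sigmaX x y = (if x \<noteq> y then 1 else 0)"

definition sigmaY :: qop where
  "sigmaY x y = (if x = False \<and> y = True then - \<i> else if x = True \<and> y = False then \<i> else 0)"

definition sigmaZ :: qop where
  "sigmaZ x y = (if x = y then (if x then -1 else 1) else 0)"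

definition pauli_comb :: "real \<Rightarrow> real \<Rightarrow> real \<Rightarrow> qop" where
  "pauli_comb b c d x y =
     complex_of_real b * sigmaX x y + complex_of_real c * sigmaY x y + complex_of_real d * sigmaZ x y"

definition op_eq :: "nat \<Rightarrow> nop \<Rightarrow> nop \<Rightarrow> bool" where
  "op_eq N \<rho> \<sigma> \<longleftrightarrow> (\<forall>x y. length x = N \<longrightarrow> length y = N \<longrightarrow> \<rho> x y = \<sigma> x y)"

definition perm_bits :: "nat \<Rightarrow> (nat \<Rightarrow> nat) \<Rightarrow> bool list \<Rightarrow> bool list" where
  "perm_bits N \<pi> x = map (\<lambda>k. x ! \<pi> k) [0..<N]"

text \<open>P(pi) rho P(pi)^dagger.\<close>
definition perm_conj :: "nat \<Rightarrow> (nat \<Rightarrow> nat) \<Rightarrow> nop \<Rightarrow> nop" where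
  "perm_conj N \<pi> \<rho> x y = \<rho> (perm_bits N \<pi> x) (perm_bits N \<pi> y)"

definition perm_invariant :: "nat \<Rightarrow> nop \<Rightarrow> bool" where
  "perm_invariant N \<rho> \<longleftrightarrow> (\<forall>\<pi>. \<pi> permutes {..<N} \<longrightarrow> op_eq N (perm_conj N \<pi> \<rho>) \<rho>)"

definition hermitian_op :: "nat \<Rightarrow> nop \<Rightarrow> bool" where
  "hermitian_op N \<rho> \<longleftrightarrow> (\<forall>x y. length x = N \<longrightarrow> length y = N \<longrightarrow> \<rho> y x = cnj (\<rho> x y))"

text \<open>sum over distinct placements of I^{(x) j} (x) A^{(x) (N-j)}: sum over the
  j-element subsets S of the N positions, factor I at positions in S, A elsewhere.\<close>
definition sym_placement :: "nat \<Rightarrow> nat \<Rightarrow> qop \<Rightarrow> nop" where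
  "sym_placement N j A x y =
     (\<Sum>S\<in>{S. S \<subseteq> {..<N} \<and> card S = j}.
        \<Prod>k<N. (if k \<in> S then idq else A) (x ! k) (y ! k))"

definition lms_expansion ::
  "nat \<Rightarrow> nat \<Rightarrow> (nat \<Rightarrow> real) \<Rightarrow> (nat \<Rightarrow> real) \<Rightarrow> (nat \<Rightarrow> real) \<Rightarrow> (nat \<Rightarrow> nat \<Rightarrow> real) \<Rightarrow> nop" where
  "lms_expansion N nA b c d \<alpha> x y =
     (\<Sum>i<nA. \<Sum>j\<le>N. complex_of_real (\<alpha> i j) *
        sym_placement N j (pauli_comb (b i) (c i) (d i)) x y)"

definition meas_complexity :: "nat \<Rightarrow> nop \<Rightarrow> nat" where
  "meas_complexity N \<rho> =
     (LEAST nA. \<exists>b c d \<alpha>. op_eq N \<rho> (lms_expansion N nA b c d \<alpha>))"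

end

theory Submission
  imports Defs
begin

text \<open>
  Let V be the complex span of the placement sums of the settings A_i. Since
  \<Sum>_j t^j \<Sum>_\<pi> I^(\<otimes>j) \<otimes> A^(\<otimes>(N-j)) = (t I + A)^(\<otimes>N), V contains (t I + A_i)^(\<otimes>N)
  for every t. Each entry of (t I + x \<sigma>_X + y \<sigma>_Y + \<sigma>_Z)^(\<otimes>N) is a polynomial of total
  degree at most N in (x, y), and the settings realise it on a triangular grid of
  (N+1)(N+2)/2 nodes, so Lagrange interpolation on that grid puts it into V for all complex
  x and y; rescaling then puts M^(\<otimes>N) into V for every 2x2 matrix M with M_00 \<noteq> M_11.
  The (u, v) entry of M^(\<otimes>N) is the monomial \<Prod>_pq M_pq^(n_pq), where n_pq counts the
  positions k with (u_k, v_k) = (p, q), and a discrete Fourier transform over roots of unity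
  extracts from these monomials the indicator of each count vector. A permutation-invariant
  operator depends on (u, v) only through the counts, hence lies in V. For Hermitian \<rho> the
  real parts of the coefficients already suffice, because every placement sum of a Hermitian
  A_i is Hermitian.
\<close>

section \<open>Bivariate polynomial functions of bounded degree\<close>

inductive bipoly_le :: "nat \<Rightarrow> (complex \<Rightarrow> complex \<Rightarrow> complex) \<Rightarrow> bool" where
  bipoly_le_const: "bipoly_le n (\<lambda>b c. a)"
| bipoly_le_fst: "1 \<le> n \<Longrightarrow> bipoly_le n (\<lambda>b c. b)"
| bipoly_le_snd: "1 \<le> n \<Longrightarrow> bipoly_le n (\<lambda>b c. c)"
| bipoly_le_add: "bipoly_le n f \<Longrightarrow> bipoly_le n g \<Longrightarrow> bipoly_le n (\<lambda>b c. f b c + g b c)"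
| bipoly_le_mult:
    "bipoly_le m f \<Longrightarrow> bipoly_le k g \<Longrightarrow> m + k \<le> n \<Longrightarrow> bipoly_le n (\<lambda>b c. f b c * g b c)"

lemma bipoly_le_swap: "bipoly_le n f \<Longrightarrow> bipoly_le n (\<lambda>b c. f c b)"
  by (induction rule: bipoly_le.induct) (auto intro: bipoly_le.intros)

lemma bipoly_le_fix_snd: "bipoly_le n f \<Longrightarrow> bipoly_le n (\<lambda>b c. f b c0)"
  by (induction rule: bipoly_le.induct) (auto intro: bipoly_le.intros)

lemma bipoly_le_0_const: "bipoly_le 0 f \<Longrightarrow> f b c = f b' c'"
  by (induction "0::nat" f rule: bipoly_le.induct) auto

lemma bipoly_le_prod:
  "finite K \<Longrightarrow> (\<And>l. l \<in> K \<Longrightarrow> bipoly_le 1 (f l)) \<Longrightarrow> bipoly_le (card K) (\<lambda>b c. \<Prod>l\<in>K. f l b c)"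
proof (induction K rule: finite_induct)
  case empty
  show ?case using bipoly_le_const[of 0 1] by simp
next
  case (insert x F)
  then show ?case
    using bipoly_le_mult[of 1 "f x" "card F" "\<lambda>b c. \<Prod>l\<in>F. f l b c" "card (insert x F)"] by simp
qed

lemma bipoly_le_affine: "bipoly_le 1 (\<lambda>b c. a0 + b * a1 + c * a2)"
proof -
  have "bipoly_le 1 (\<lambda>b c. b * a1)" "bipoly_le 1 (\<lambda>b c. c * a2)"
    by (auto intro: bipoly_le_mult[where m = 1 and k = 0] bipoly_le.intros)
  then show ?thesis by (rule bipoly_le_add[OF bipoly_le_add[OF bipoly_le_const]])
qed

lemma bipoly_le_quotient_mult:
  assumes "bipoly_le (m - 1) q" "m = 0 \<longrightarrow> (\<forall>b c. q b c = 0)" "bipoly_le k g" "m + k \<le> n"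
  shows "bipoly_le (n - 1) (\<lambda>b c. q b c * g b c)"
proof (cases "m = 0")
  case True
  then have "(\<lambda>b c. q b c * g b c) = (\<lambda>b c. 0)" using assms(2) by auto
  then show ?thesis by (auto intro: bipoly_le_const)
next
  case False
  then show ?thesis using bipoly_le_mult[OF assms(1,3)] assms(4) by simp
qed

text \<open>The quotient is required to vanish when n = 0; this keeps the degree bookkeeping of
  the product case uniform.\<close>
lemma bipoly_le_divide_snd:
  "bipoly_le n f \<Longrightarrow> \<exists>q. bipoly_le (n - 1) q \<and> (n = 0 \<longrightarrow> (\<forall>b c. q b c = 0))
     \<and> (\<forall>b c. f b c = f b c' + (c - c') * q b c)"
proof (induction rule: bipoly_le.induct)
  case (bipoly_le_const n a)
  show ?case by (intro exI[of _ "\<lambda>b c. 0"]) (auto intro: bipoly_le.bipoly_le_const)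
next
  case (bipoly_le_fst n)
  show ?case by (intro exI[of _ "\<lambda>b c. 0"]) (auto intro: bipoly_le.bipoly_le_const)
next
  case (bipoly_le_snd n)
  then show ?case by (intro exI[of _ "\<lambda>b c. 1"]) (auto intro: bipoly_le.bipoly_le_const)
next
  case (bipoly_le_add n f g)
  then obtain q1 q2 where
    q1: "bipoly_le (n - 1) q1" "n = 0 \<longrightarrow> (\<forall>b c. q1 b c = 0)" "\<forall>b c. f b c = f b c' + (c - c') * q1 b c"
    and
    q2: "bipoly_le (n - 1) q2" "n = 0 \<longrightarrow> (\<forall>b c. q2 b c = 0)" "\<forall>b c. g b c = g b c' + (c - c') * q2 b c"
    by blast
  have "f b c + g b c = f b c' + g b c' + (c - c') * (q1 b c + q2 b c)" for b c
    using q1(3)[rule_format, of b c] q2(3)[rule_format, of b c] by (simp add: algebra_simps)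
  moreover have "n = 0 \<longrightarrow> (\<forall>b c. q1 b c + q2 b c = 0)" using q1(2) q2(2) by simp
  ultimately show ?case using bipoly_le.bipoly_le_add[OF q1(1) q2(1)] by blast
next
  case (bipoly_le_mult m f k g n)
  then obtain q1 q2 where
    q1: "bipoly_le (m - 1) q1" "m = 0 \<longrightarrow> (\<forall>b c. q1 b c = 0)" "\<forall>b c. f b c = f b c' + (c - c') * q1 b c"
    and
    q2: "bipoly_le (k - 1) q2" "k = 0 \<longrightarrow> (\<forall>b c. q2 b c = 0)" "\<forall>b c. g b c = g b c' + (c - c') * q2 b c"
    by blast
  define q where "q b c = q1 b c * g b c + q2 b c * f b c'" for b c
  have "bipoly_le (n - 1) q"
    unfolding q_def using bipoly_le_mult.hyps
    by (intro bipoly_le.bipoly_le_add bipoly_le_quotient_mult[OF q1(1,2)] bipoly_le_quotient_mult[OF q2(1,2)])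
       (auto intro: bipoly_le_fix_snd)
  moreover have "n = 0 \<longrightarrow> (\<forall>b c. q b c = 0)"
    using q1(2) q2(2) bipoly_le_mult.hyps(3) unfolding q_def by auto
  moreover have "f b c * g b c = f b c' * g b c' + (c - c') * q b c" for b c
    unfolding q_def q1(3)[rule_format, of b c] q2(3)[rule_format, of b c]
    by (simp add: algebra_simps)
  ultimately show ?case by blast
qed

lemma bipoly_le_divide_fst:
  assumes "bipoly_le n f"
  obtains q where "bipoly_le (n - 1) q" "\<And>b c. f b c = f b' c + (b - b') * q b c"
proof -
  obtain q where q: "bipoly_le (n - 1) q" "\<forall>b c. f c b = f b' b + (c - b') * q b c"
    using bipoly_le_divide_snd[OF bipoly_le_swap[OF assms], of b'] by blast
  show ?thesis
  proof (rule that)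
    show "bipoly_le (n - 1) (\<lambda>b c. q c b)" using bipoly_le_swap[OF q(1)] .
    show "f b c = f b' c + (b - b') * q c b" for b c using q(2) by blast
  qed
qed


section \<open>Interpolation on a triangular grid\<close>

locale lin_closed =
  fixes R :: "('u \<Rightarrow> 'v \<Rightarrow> complex) \<Rightarrow> bool"
  assumes zero_closed: "R (\<lambda>u v. 0)"
    and add_closed: "R F \<Longrightarrow> R G \<Longrightarrow> R (\<lambda>u v. F u v + G u v)"
    and scale_closed: "R F \<Longrightarrow> R (\<lambda>u v. s * F u v)"
begin

lemma lincomb_closed: "R F \<Longrightarrow> R G \<Longrightarrow> R (\<lambda>u v. s * F u v + t * G u v)"
  by (intro add_closed scale_closed)

lemma difference_quotient_closed: "R F \<Longrightarrow> R G \<Longrightarrow> R (\<lambda>u v. (F u v - G u v) / s)"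
  using lincomb_closed[of F G "1 / s" "- 1 / s"] by (simp add: diff_divide_distrib)

lemma sum_closed: "finite I \<Longrightarrow> (\<And>i. i \<in> I \<Longrightarrow> R (F i)) \<Longrightarrow> R (\<lambda>u v. \<Sum>i\<in>I. w i * F i u v)"
  by (induction I rule: finite_induct) (auto intro: zero_closed lincomb_closed[where t = 1, simplified])

lemma interpolation_univariate:
  assumes "inj_on bs {..N}"
    and "\<And>u v. bipoly_le N (\<lambda>b c. F b u v)"
    and "\<And>j. j \<le> N \<Longrightarrow> R (F (bs j))"
  shows "R (F x)"
  using assms
proof (induction N arbitrary: bs F)
  case 0
  have "F x = F (bs 0)"
    using bipoly_le_0_const[OF "0.prems"(2)] by (intro ext) blast
  with "0.prems"(3) show ?case by simp
next
  case (Suc N)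
  define b0 where "b0 = bs 0"
  have "\<exists>q. bipoly_le N q \<and> (\<forall>b c. F b u v = F b0 u v + (b - b0) * q b c)" for u v
    using bipoly_le_divide_fst[OF Suc.prems(2), where b' = b0] by (metis diff_Suc_1)
  then obtain q where q: "\<And>u v. bipoly_le N (q u v)"
    and F_eq: "\<And>u v b c. F b u v = F b0 u v + (b - b0) * q u v b c"
    by metis
  define G where "G b u v = q u v b 0" for b u v
  have nodes: "inj_on (bs \<circ> Suc) {..N}"
    using Suc.prems(1) by (auto simp: inj_on_def)
  have "R (G ((bs \<circ> Suc) j))" if "j \<le> N" for j
  proof -
    have "bs (Suc j) \<noteq> b0"
      using Suc.prems(1) that unfolding b0_def inj_on_def by force
    then have "G (bs (Suc j)) = (\<lambda>u v. (F (bs (Suc j)) u v - F b0 u v) / (bs (Suc j) - b0))"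
      unfolding G_def by (intro ext) (simp add: F_eq[of "bs (Suc j)" _ _ 0])
    moreover have "R (F (bs (Suc j)))" "R (F b0)"
      using Suc.prems(3) that unfolding b0_def by auto
    ultimately show ?thesis by (simp add: difference_quotient_closed)
  qed
  then have "R (G x)"
    using Suc.IH[OF nodes, of G] q bipoly_le_fix_snd unfolding G_def by blast
  moreover have "R (F b0)" using Suc.prems(3) unfolding b0_def by auto
  moreover have "F x = (\<lambda>u v. F b0 u v + (x - b0) * G x u v)"
    unfolding G_def by (intro ext) (simp add: F_eq[of x _ _ 0])
  ultimately show ?case by (simp add: add_closed scale_closed)
qed

text \<open>Divide out c - cs 0: the quotient has degree N - 1 and is interpolated on the smaller
  triangle, the restriction to c = cs 0 on the full row of N + 1 nodes.\<close>
lemma interpolation_triangular: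
  assumes "inj_on bs {..N}" "inj_on cs {..N}"
    and "\<And>u v. bipoly_le N (\<lambda>b c. F b c u v)"
    and "\<And>j k. j + k \<le> N \<Longrightarrow> R (F (bs j) (cs k))"
  shows "R (F x y)"
  using assms
proof (induction N arbitrary: cs F x y)
  case 0
  have "F x y = F (bs 0) (cs 0)"
    using bipoly_le_0_const[OF "0.prems"(3)] by (intro ext) blast
  with "0.prems"(4) show ?case by simp
next
  case (Suc N)
  define c0 where "c0 = cs 0"
  have "\<exists>q. bipoly_le N q \<and> (\<forall>b c. F b c u v = F b c0 u v + (c - c0) * q b c)" for u v
    using bipoly_le_divide_snd[OF Suc.prems(3), where c' = c0] by (metis diff_Suc_1)
  then obtain q where q: "\<And>u v. bipoly_le N (q u v)"
    and F_eq: "\<And>u v b c. F b c u v = F b c0 u v + (c - c0) * q u v b c"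
    by metis
  define G where "G b c u v = q u v b c" for b c u v
  have nodes: "inj_on bs {..N}" "inj_on (cs \<circ> Suc) {..N}"
    using Suc.prems(1,2) by (auto simp: inj_on_def)
  have "R (G (bs j) ((cs \<circ> Suc) k))" if "j + k \<le> N" for j k
  proof -
    have "cs (Suc k) \<noteq> c0"
      using Suc.prems(2) that unfolding c0_def inj_on_def by force
    then have "G (bs j) (cs (Suc k))
        = (\<lambda>u v. (F (bs j) (cs (Suc k)) u v - F (bs j) c0 u v) / (cs (Suc k) - c0))"
      unfolding G_def by (intro ext) (simp add: F_eq[of "bs j" "cs (Suc k)"])
    moreover have "R (F (bs j) (cs (Suc k)))" "R (F (bs j) c0)"
      using Suc.prems(4) that unfolding c0_def by auto
    ultimately show ?thesis by (simp add: difference_quotient_closed)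
  qed
  then have "R (G x y)"
    using Suc.IH[OF nodes, of G] q unfolding G_def by (simp add: eta_contract_eq)
  moreover have "R (F x c0)"
  proof (rule interpolation_univariate[of bs "Suc N" "\<lambda>b. F b c0"])
    show "inj_on bs {..Suc N}" by (fact Suc.prems(1))
    show "bipoly_le (Suc N) (\<lambda>b c. F b c0 u v)" for u v
      using bipoly_le_fix_snd[OF Suc.prems(3)] .
    show "R (F (bs j) c0)" if "j \<le> Suc N" for j
      using Suc.prems(4)[of j 0] that unfolding c0_def by simp
  qed
  moreover have "F x y = (\<lambda>u v. F x c0 u v + (y - c0) * G x y u v)"
    unfolding G_def by (intro ext) (simp add: F_eq[of x y])
  ultimately show ?case by (simp add: add_closed scale_closed)
qed

end


section \<open>Tensor powers in the span of the placement sums\<close>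

definition lms_span ::
  "nat \<Rightarrow> nat \<Rightarrow> (nat \<Rightarrow> real) \<Rightarrow> (nat \<Rightarrow> real) \<Rightarrow> (nat \<Rightarrow> real) \<Rightarrow> nop \<Rightarrow> bool" where
  "lms_span N nA b c d F \<longleftrightarrow> (\<exists>\<alpha> :: nat \<Rightarrow> nat \<Rightarrow> complex. \<forall>u v. length u = N \<longrightarrow> length v = N \<longrightarrow>
     F u v = (\<Sum>i<nA. \<Sum>j\<le>N. \<alpha> i j * sym_placement N j (pauli_comb (b i) (c i) (d i)) u v))"

lemma lin_closed_lms_span: "lin_closed (lms_span N nA b c d)"
proof
  show "lms_span N nA b c d (\<lambda>u v. 0)"
    unfolding lms_span_def by (intro exI[of _ "\<lambda>i j. 0"]) simp
next
  fix F G assume "lms_span N nA b c d F" "lms_span N nA b c d G"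
  then obtain \<alpha> \<beta> where
    "\<forall>u v. length u = N \<longrightarrow> length v = N \<longrightarrow>
       F u v = (\<Sum>i<nA. \<Sum>j\<le>N. \<alpha> i j * sym_placement N j (pauli_comb (b i) (c i) (d i)) u v)"
    "\<forall>u v. length u = N \<longrightarrow> length v = N \<longrightarrow>
       G u v = (\<Sum>i<nA. \<Sum>j\<le>N. \<beta> i j * sym_placement N j (pauli_comb (b i) (c i) (d i)) u v)"
    unfolding lms_span_def by blast
  then show "lms_span N nA b c d (\<lambda>u v. F u v + G u v)"
    unfolding lms_span_def
    by (intro exI[of _ "\<lambda>i j. \<alpha> i j + \<beta> i j"]) (simp add: distrib_right sum.distrib)
next
  fix F s assume "lms_span N nA b c d F"
  then obtain \<alpha> where
    "\<forall>u v. length u = N \<longrightarrow> length v = N \<longrightarrow>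
       F u v = (\<Sum>i<nA. \<Sum>j\<le>N. \<alpha> i j * sym_placement N j (pauli_comb (b i) (c i) (d i)) u v)"
    unfolding lms_span_def by blast
  then show "lms_span N nA b c d (\<lambda>u v. s * F u v)"
    unfolding lms_span_def
    by (intro exI[of _ "\<lambda>i j. s * \<alpha> i j"]) (simp add: sum_distrib_left mult.assoc)
qed

lemma lms_span_cong:
  "lms_span N nA b c d F \<Longrightarrow> (\<And>u v. length u = N \<Longrightarrow> length v = N \<Longrightarrow> G u v = F u v)
    \<Longrightarrow> lms_span N nA b c d G"
  unfolding lms_span_def by simp

definition tensor_pow :: "nat \<Rightarrow> qop \<Rightarrow> nop" where
  "tensor_pow N M u v = (\<Prod>k<N. M (u ! k) (v ! k))"

lemma tensor_pow_scale: "tensor_pow N (\<lambda>p q. s * M p q) u v = s ^ N * tensor_pow N M u v"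
  unfolding tensor_pow_def by (simp add: prod.distrib)

lemma sum_power_sym_placement:
  "(\<Sum>j\<le>N. t ^ j * sym_placement N j A u v) = tensor_pow N (\<lambda>p q. t * idq p q + A p q) u v"
proof -
  let ?K = "{..<N}"
  let ?I = "\<lambda>k. idq (u ! k) (v ! k)" and ?A = "\<lambda>k. A (u ! k) (v ! k)"
  have split: "(\<Prod>k<N. (if k \<in> S then idq else A) (u ! k) (v ! k)) = prod ?I S * prod ?A (?K - S)"
    if "S \<subseteq> ?K" for S
  proof -
    have "(\<Prod>k<N. (if k \<in> S then idq else A) (u ! k) (v ! k)) = (\<Prod>k<N. if k \<in> S then ?I k else ?A k)"
      by (rule prod.cong) auto
    also have "\<dots> = prod ?I (?K \<inter> S) * prod ?A (?K - S)"
      by (simp add: prod.If_cases Diff_eq)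
    also have "?K \<inter> S = S" using that by auto
    finally show ?thesis .
  qed
  have "(\<Sum>j\<le>N. t ^ j * sym_placement N j A u v)
      = (\<Sum>j\<le>N. \<Sum>S\<in>{S \<in> Pow ?K. card S = j}. t ^ card S * (prod ?I S * prod ?A (?K - S)))"
    unfolding sym_placement_def sum_distrib_left
    by (intro sum.cong refl) (auto simp: split)
  also have "\<dots> = (\<Sum>S\<in>Pow ?K. t ^ card S * (prod ?I S * prod ?A (?K - S)))"
    by (rule sum.group) (auto simp: card_mono[of ?K, simplified])
  also have "\<dots> = (\<Sum>S\<in>Pow ?K. (\<Prod>k\<in>S. t * ?I k) * prod ?A (?K - S))"
    by (intro sum.cong refl) (auto simp: prod.distrib dest: finite_subset)
  also have "\<dots> = tensor_pow N (\<lambda>p q. t * idq p q + A p q) u v"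
    unfolding tensor_pow_def by (rule prod_add[symmetric]) simp
  finally show ?thesis .
qed

lemma lms_span_tensor_pow_shifted_setting:
  assumes "i < nA"
  shows "lms_span N nA b c d (tensor_pow N (\<lambda>p q. t * idq p q + pauli_comb (b i) (c i) (d i) p q))"
  unfolding lms_span_def
proof (intro exI[of _ "\<lambda>i' j. if i' = i then t ^ j else 0"] allI impI)
  fix u v :: "bool list"
  let ?P = "\<lambda>i' j. sym_placement N j (pauli_comb (b i') (c i') (d i')) u v"
  have "tensor_pow N (\<lambda>p q. t * idq p q + pauli_comb (b i) (c i) (d i) p q) u v
      = (\<Sum>j\<le>N. t ^ j * ?P i j)"
    by (simp add: sum_power_sym_placement)
  also have "\<dots> = (\<Sum>i'<nA. if i' = i then \<Sum>j\<le>N. t ^ j * ?P i' j else 0)"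
    using assms by simp
  also have "\<dots> = (\<Sum>i'<nA. \<Sum>j\<le>N. (if i' = i then t ^ j else 0) * ?P i' j)"
    by (rule sum.cong) auto
  finally show "tensor_pow N (\<lambda>p q. t * idq p q + pauli_comb (b i) (c i) (d i) p q) u v
      = (\<Sum>i'<nA. \<Sum>j\<le>N. (if i' = i then t ^ j else 0) * ?P i' j)" .
qed

definition triangular_settings ::
  "nat \<Rightarrow> nat \<Rightarrow> (nat \<Rightarrow> real) \<Rightarrow> (nat \<Rightarrow> real) \<Rightarrow> (nat \<Rightarrow> real) \<Rightarrow> bool" where
  "triangular_settings N nA b c d \<longleftrightarrow> (\<exists>bs cs. inj_on bs {..N} \<and> inj_on cs {..N} \<and>
     (\<forall>j k. j + k \<le> N \<longrightarrow> (\<exists>i<nA. b i = bs j \<and> c i = cs k \<and> d i = 1)))"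

definition cpauli :: "complex \<Rightarrow> complex \<Rightarrow> qop" where
  "cpauli x y p q = x * sigmaX p q + y * sigmaY p q + sigmaZ p q"

lemma lms_span_tensor_pow_cpauli:
  assumes "triangular_settings N nA b c d"
  shows "lms_span N nA b c d (tensor_pow N (\<lambda>p q. t * idq p q + cpauli x y p q))"
proof -
  interpret lin_closed "lms_span N nA b c d" by (rule lin_closed_lms_span)
  obtain bs cs where inj: "inj_on bs {..N}" "inj_on cs {..N}"
    and grid: "\<And>j k. j + k \<le> N \<Longrightarrow> \<exists>i<nA. b i = bs j \<and> c i = cs k \<and> d i = 1"
    using assms unfolding triangular_settings_def by blast
  let ?F = "\<lambda>x y. tensor_pow N (\<lambda>p q. t * idq p q + cpauli x y p q)"
  show ?thesis
  proof (rule interpolation_triangular[of "\<lambda>j. complex_of_real (bs j)" N "\<lambda>k. complex_of_real (cs k)" ?F])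
    show "inj_on (\<lambda>j. complex_of_real (bs j)) {..N}" "inj_on (\<lambda>k. complex_of_real (cs k)) {..N}"
      using inj by (auto simp: inj_on_def)
    show "bipoly_le N (\<lambda>x y. ?F x y u v)" for u v
    proof -
      have "bipoly_le (card {..<N}) (\<lambda>x y. \<Prod>k<N. t * idq (u ! k) (v ! k) + cpauli x y (u ! k) (v ! k))"
      proof (rule bipoly_le_prod)
        fix k
        have "(\<lambda>x y. t * idq (u ! k) (v ! k) + cpauli x y (u ! k) (v ! k))
            = (\<lambda>x y. (t * idq (u ! k) (v ! k) + sigmaZ (u ! k) (v ! k))
                 + x * sigmaX (u ! k) (v ! k) + y * sigmaY (u ! k) (v ! k))"
          unfolding cpauli_def by (auto simp: algebra_simps)
        then show "bipoly_le 1 (\<lambda>x y. t * idq (u ! k) (v ! k) + cpauli x y (u ! k) (v ! k))"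
          by (simp only: bipoly_le_affine)
      qed simp
      then show ?thesis unfolding tensor_pow_def by simp
    qed
    show "lms_span N nA b c d (?F (bs j) (cs k))" if jk: "j + k \<le> N" for j k
    proof -
      obtain i where i: "i < nA" "b i = bs j" "c i = cs k" "d i = 1" using grid[OF jk] by blast
      have "cpauli (bs j) (cs k) = pauli_comb (b i) (c i) (d i)"
        unfolding cpauli_def pauli_comb_def i(2-4) by (intro ext) simp
      then show ?thesis using lms_span_tensor_pow_shifted_setting[OF i(1)] by simp
    qed
  qed
qed

text \<open>A 2x2 matrix with M_00 \<noteq> M_11 is a multiple of some t I + x \<sigma>_X + y \<sigma>_Y + \<sigma>_Z.\<close>
lemma lms_span_tensor_pow:
  assumes "triangular_settings N nA b c d" and "M False False \<noteq> M True True"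
  shows "lms_span N nA b c d (tensor_pow N M)"
proof -
  interpret lin_closed "lms_span N nA b c d" by (rule lin_closed_lms_span)
  define s where "s = (M False False - M True True) / 2"
  define t where "t = (M False False + M True True) / (2 * s)"
  define x where "x = (M False True + M True False) / (2 * s)"
  define y where "y = \<i> * (M False True - M True False) / (2 * s)"
  have "s \<noteq> 0" using assms(2) unfolding s_def by simp
  then have st: "s * t = (M False False + M True True) / 2"
    and sx: "s * x = (M False True + M True False) / 2"
    and sy: "s * y = \<i> * (M False True - M True False) / 2"
    unfolding t_def x_def y_def by (simp_all add: field_simps)
  have "M p q = (s * t) * idq p q + (s * x) * sigmaX p q + (s * y) * sigmaY p q + s * sigmaZ p q" for p q
    unfolding st sx sy unfolding s_def idq_def sigmaX_def sigmaY_def sigmaZ_def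
    by (cases p; cases q) (simp_all add: field_simps)
  then have M_eq: "M = (\<lambda>p q. s * (t * idq p q + cpauli x y p q))"
    unfolding cpauli_def by (intro ext) (simp add: algebra_simps)
  have "tensor_pow N M = (\<lambda>u v. s ^ N * tensor_pow N (\<lambda>p q. t * idq p q + cpauli x y p q) u v)"
    unfolding M_eq by (intro ext) (rule tensor_pow_scale)
  then show ?thesis using scale_closed[OF lms_span_tensor_pow_cpauli[OF assms(1)]] by simp
qed


section \<open>Permutation-invariant operators\<close>

lemma prod_nth_eq_prod_count_list:
  fixes f :: "'a::finite \<Rightarrow> 'b::comm_monoid_mult"
  shows "(\<Prod>k<length xs. f (xs ! k)) = (\<Prod>x\<in>UNIV. f x ^ count_list xs x)"
proof (induction xs)
  case Nil
  show ?case by simp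
next
  case (Cons a xs)
  have "(\<Prod>k<length (a # xs). f ((a # xs) ! k)) = f a * (\<Prod>k<length xs. f (xs ! k))"
    by (simp only: length_Cons prod.lessThan_Suc_shift nth_Cons_0 nth_Cons_Suc)
  also have "\<dots> = (\<Prod>x\<in>UNIV. if x = a then f x else 1) * (\<Prod>x\<in>UNIV. f x ^ count_list xs x)"
    using Cons by simp
  also have "\<dots> = (\<Prod>x\<in>UNIV. f x ^ count_list (a # xs) x)"
    by (subst prod.distrib[symmetric]) (rule prod.cong, auto)
  finally show ?case .
qed

definition pair_count :: "bool list \<Rightarrow> bool list \<Rightarrow> bool \<times> bool \<Rightarrow> nat" where
  "pair_count u v = count_list (zip u v)"

lemma pair_count_le: "length u = N \<Longrightarrow> length v = N \<Longrightarrow> pair_count u v pq \<le> N"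
  unfolding pair_count_def using count_le_length[of "zip u v" pq] by simp

lemma tensor_pow_pair_count:
  assumes "length u = N" "length v = N"
  shows "tensor_pow N M u v = (\<Prod>pq\<in>UNIV. case_prod M pq ^ pair_count u v pq)"
  using prod_nth_eq_prod_count_list[of "case_prod M" "zip u v"] assms
  unfolding tensor_pow_def pair_count_def by simp

lemma perm_invariant_pair_count:
  assumes "perm_invariant N \<rho>"
    and len: "length u = N" "length v = N" "length u' = N" "length v' = N"
    and "pair_count u v = pair_count u' v'"
  shows "\<rho> u v = \<rho> u' v'"
proof -
  have "mset (zip u v) = mset (zip u' v')"
    using assms(6) by (intro multiset_eqI) (simp add: count_mset pair_count_def)
  then obtain p where p: "p permutes {..<length (zip u' v')}" "permute_list p (zip u' v') = zip u v"
    using mset_eq_permutation by metis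
  have lz: "length (zip u' v') = N" using len by simp
  have "p i < N" if "i < N" for i using permutes_in_image[OF p(1), of i] len that by simp
  have "map fst (permute_list p (zip u' v')) = perm_bits N p u'"
    "map snd (permute_list p (zip u' v')) = perm_bits N p v'"
    unfolding permute_list_def perm_bits_def lz
    using lz len by (auto intro!: map_cong simp: \<open>\<And>i. i < N \<Longrightarrow> p i < N\<close> nth_zip)
  then have "perm_bits N p u' = u" "perm_bits N p v' = v"
    using p(2) len by simp_all
  moreover have "op_eq N (perm_conj N p \<rho>) \<rho>"
    using assms(1) p(1) lz unfolding perm_invariant_def by simp
  ultimately show ?thesis
    using len unfolding op_eq_def perm_conj_def by metis
qed

lemma sum_roots_unity_power_quotient:
  fixes s :: complex and L k m :: nat
  defines "\<omega> l \<equiv> s * cis (2 * pi * real l / real L)"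
  assumes "s \<noteq> 0" "k < L" "m < L"
  shows "(\<Sum>l<L. \<omega> l ^ k / \<omega> l ^ m) = (if k = m then of_nat L else 0)"
proof (cases "k = m")
  case True
  then show ?thesis using assms(2) by (simp add: \<omega>_def)
next
  case False
  define r where "r j = cis (2 * pi * real j / real L)" for j
  have roots: "bij_betw r {..<L} {z. z ^ L = 1}"
    unfolding r_def by (rule Complex.bij_betw_roots_unity) (use assms(3) in simp)
  define z where "z = r k / r m"
  have "r k \<noteq> r m" using roots False assms(3,4) by (auto simp: bij_betw_def inj_on_def)
  then have "z \<noteq> 1" by (simp add: z_def r_def)
  have "r k ^ L = 1" "r m ^ L = 1" using roots assms(3,4) by (auto dest: bij_betw_apply)
  then have "z ^ L = 1" by (simp add: z_def power_divide)
  have "\<omega> l ^ k / \<omega> l ^ m = s ^ k / s ^ m * z ^ l" for l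
  proof -
    have "cis (2 * pi * real l / real L) ^ n = r n ^ l" for n
      unfolding r_def Complex.DeMoivre by (simp add: mult_ac)
    then show ?thesis by (simp add: \<omega>_def z_def power_mult_distrib power_divide)
  qed
  then have "(\<Sum>l<L. \<omega> l ^ k / \<omega> l ^ m) = s ^ k / s ^ m * (\<Sum>l<L. z ^ l)"
    by (simp add: sum_distrib_left)
  also have "(\<Sum>l<L. z ^ l) = 0"
    using geometric_sum[OF \<open>z \<noteq> 1\<close>, of L] \<open>z ^ L = 1\<close> by simp
  finally show ?thesis using False by simp
qed

text \<open>The factor 2 on the entry (1,1) separates the diagonal entries by their modulus, so every
  probing matrix is covered by lms_span_tensor_pow.\<close>
definition probe :: "nat \<Rightarrow> bool \<times> bool \<Rightarrow> nat \<Rightarrow> complex" where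
  "probe N pq l = (if pq = (True, True) then 2 else 1) * cis (2 * pi * real l / real (Suc N))"

lemma probe_fourier_inversion:
  assumes "k \<le> N" "m \<le> N"
  shows "(if k = m then 1 else 0) = (\<Sum>l<Suc N. 1 / (of_nat (Suc N) * probe N pq l ^ m) * probe N pq l ^ k)"
proof -
  have "(\<Sum>l<Suc N. probe N pq l ^ k / probe N pq l ^ m) = (if k = m then of_nat (Suc N) else 0)"
    unfolding probe_def using assms by (intro sum_roots_unity_power_quotient) auto
  then have "(if k = m then 1 else 0) = (\<Sum>l<Suc N. probe N pq l ^ k / probe N pq l ^ m) / of_nat (Suc N)"
    by (simp del: of_nat_Suc)
  also have "\<dots> = (\<Sum>l<Suc N. 1 / (of_nat (Suc N) * probe N pq l ^ m) * probe N pq l ^ k)"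
    unfolding sum_divide_distrib by (rule sum.cong) (simp_all add: divide_divide_eq_left ac_simps)
  finally show ?thesis .
qed

lemma pair_count_indicator_expansion:
  assumes "\<forall>pq. K pq \<le> N" "length u = N" "length v = N"
  shows "(if pair_count u v = K then 1 else 0) =
    (\<Sum>g\<in>PiE UNIV (\<lambda>_. {..<Suc N}). (\<Prod>pq\<in>UNIV. 1 / (of_nat (Suc N) * probe N pq (g pq) ^ K pq))
       * tensor_pow N (\<lambda>p q. probe N (p, q) (g (p, q))) u v)"
proof -
  have "(if pair_count u v = K then 1 else 0) = (\<Prod>pq\<in>UNIV. if pair_count u v pq = K pq then 1 else (0::complex))"
  proof (cases "pair_count u v = K")
    case False
    then obtain pq where "pair_count u v pq \<noteq> K pq" by (auto simp: fun_eq_iff)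
    then show ?thesis using False by (auto intro: prod_zero)
  qed simp
  also have "\<dots> = (\<Prod>pq\<in>UNIV. \<Sum>l<Suc N. 1 / (of_nat (Suc N) * probe N pq l ^ K pq) * probe N pq l ^ pair_count u v pq)"
    using assms by (intro prod.cong refl probe_fourier_inversion pair_count_le) auto
  also have "\<dots> = (\<Sum>g\<in>PiE UNIV (\<lambda>_. {..<Suc N}).
      \<Prod>pq\<in>UNIV. 1 / (of_nat (Suc N) * probe N pq (g pq) ^ K pq) * probe N pq (g pq) ^ pair_count u v pq)"
    by (rule prod_sum_PiE) auto
  also have "\<dots> = (\<Sum>g\<in>PiE UNIV (\<lambda>_. {..<Suc N}). (\<Prod>pq\<in>UNIV. 1 / (of_nat (Suc N) * probe N pq (g pq) ^ K pq))
       * tensor_pow N (\<lambda>p q. probe N (p, q) (g (p, q))) u v)"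
  proof (rule sum.cong[OF refl])
    fix g :: "bool \<times> bool \<Rightarrow> nat"
    have "tensor_pow N (\<lambda>p q. probe N (p, q) (g (p, q))) u v = (\<Prod>pq\<in>UNIV. probe N pq (g pq) ^ pair_count u v pq)"
      using assms(2,3) by (simp add: tensor_pow_pair_count case_prod_beta)
    then show "(\<Prod>pq\<in>UNIV. 1 / (of_nat (Suc N) * probe N pq (g pq) ^ K pq) * probe N pq (g pq) ^ pair_count u v pq)
        = (\<Prod>pq\<in>UNIV. 1 / (of_nat (Suc N) * probe N pq (g pq) ^ K pq)) * tensor_pow N (\<lambda>p q. probe N (p, q) (g (p, q))) u v"
      by (simp only: prod.distrib)
  qed
  finally show ?thesis .
qed

lemma lms_span_pair_count_indicator:
  assumes "triangular_settings N nA b c d" "\<forall>pq. K pq \<le> N"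
  shows "lms_span N nA b c d (\<lambda>u v. if pair_count u v = K then 1 else 0)"
proof -
  interpret lin_closed "lms_span N nA b c d" by (rule lin_closed_lms_span)
  have "lms_span N nA b c d (\<lambda>u v. \<Sum>g\<in>PiE UNIV (\<lambda>_. {..<Suc N}).
      (\<Prod>pq\<in>UNIV. 1 / (of_nat (Suc N) * probe N pq (g pq) ^ K pq))
       * tensor_pow N (\<lambda>p q. probe N (p, q) (g (p, q))) u v)"
  proof (rule sum_closed)
    fix g :: "bool \<times> bool \<Rightarrow> nat"
    have "norm (probe N (False, False) (g (False, False))) \<noteq> norm (probe N (True, True) (g (True, True)))"
      unfolding probe_def by (simp add: norm_mult)
    then show "lms_span N nA b c d (tensor_pow N (\<lambda>p q. probe N (p, q) (g (p, q))))"
      by (intro lms_span_tensor_pow[OF assms(1)]) auto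
  qed (simp add: finite_PiE)
  then show ?thesis
    by (rule lms_span_cong) (simp add: pair_count_indicator_expansion[OF assms(2)])
qed

text \<open>A permutation-invariant operator is the combination, over all count vectors K, of the
  indicators of pair_count = K, weighted by its value at any representative of K.\<close>
lemma lms_span_perm_invariant:
  assumes "triangular_settings N nA b c d" "perm_invariant N \<rho>"
  shows "lms_span N nA b c d \<rho>"
proof -
  interpret lin_closed "lms_span N nA b c d" by (rule lin_closed_lms_span)
  define Ks where "Ks = PiE (UNIV :: (bool \<times> bool) set) (\<lambda>_. {..N})"
  define rep where "rep K = (SOME uv. length (fst uv) = N \<and> length (snd uv) = N
      \<and> pair_count (fst uv) (snd uv) = K)" for K
  have "lms_span N nA b c d (\<lambda>u v. \<Sum>K\<in>Ks. case_prod \<rho> (rep K) * (if pair_count u v = K then 1 else 0))"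
    unfolding Ks_def
    by (intro sum_closed lms_span_pair_count_indicator[OF assms(1)]) (auto simp: PiE_iff finite_PiE)
  then show ?thesis
  proof (rule lms_span_cong)
    fix u v :: "bool list" assume len: "length u = N" "length v = N"
    let ?K = "pair_count u v"
    obtain u' v' where uv': "rep ?K = (u', v')" by fastforce
    have "length u' = N \<and> length v' = N \<and> pair_count u' v' = ?K"
      using someI[of "\<lambda>uv. length (fst uv) = N \<and> length (snd uv) = N \<and> pair_count (fst uv) (snd uv) = ?K"
          "(u, v)"] len uv'
      unfolding rep_def by simp
    then have "case_prod \<rho> (rep ?K) = \<rho> u v"
      using perm_invariant_pair_count[OF assms(2), of u' v' u v] len uv' by simp
    moreover have "?K \<in> Ks" "finite Ks"
      using len unfolding Ks_def by (auto simp: PiE_iff pair_count_le finite_PiE)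
    ultimately have "(\<Sum>K\<in>Ks. if ?K = K then case_prod \<rho> (rep K) else 0) = \<rho> u v"
      by simp
    then show "\<rho> u v = (\<Sum>K\<in>Ks. case_prod \<rho> (rep K) * (if pair_count u v = K then 1 else 0))"
      by (simp add: if_distrib[of "(*) _"] cong: if_cong)
  qed
qed


section \<open>Hermitian operators\<close>

lemma cnj_pauli_comb: "cnj (pauli_comb b c d p q) = pauli_comb b c d q p"
  unfolding pauli_comb_def sigmaX_def sigmaY_def sigmaZ_def by (cases p; cases q) simp_all

lemma cnj_sym_placement_pauli_comb:
  "cnj (sym_placement N j (pauli_comb b c d) u v) = sym_placement N j (pauli_comb b c d) v u"
  unfolding sym_placement_def cnj_sum cnj_prod
  by (intro sum.cong prod.cong refl) (auto simp: idq_def cnj_pauli_comb)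

text \<open>Averaging an expansion of \<rho> with that of its adjoint replaces each coefficient by its
  real part.\<close>
lemma hermitian_lms_span_real_expansion:
  assumes "lms_span N nA b c d \<rho>" "hermitian_op N \<rho>"
  shows "\<exists>\<alpha>. op_eq N \<rho> (lms_expansion N nA b c d \<alpha>)"
proof -
  let ?P = "\<lambda>i j u v. sym_placement N j (pauli_comb (b i) (c i) (d i)) u v"
  obtain \<alpha> where \<alpha>: "\<And>u v. length u = N \<Longrightarrow> length v = N \<Longrightarrow>
      \<rho> u v = (\<Sum>i<nA. \<Sum>j\<le>N. \<alpha> i j * ?P i j u v)"
    using assms(1) unfolding lms_span_def by blast
  have "\<rho> u v = (\<Sum>i<nA. \<Sum>j\<le>N. complex_of_real (Re (\<alpha> i j)) * ?P i j u v)"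
    if len: "length u = N" "length v = N" for u v
  proof -
    have "\<rho> v u = cnj (\<rho> u v)"
      using assms(2) len unfolding hermitian_op_def by blast
    then have "\<rho> u v = cnj (\<rho> v u)" by simp
    also have "\<dots> = (\<Sum>i<nA. \<Sum>j\<le>N. cnj (\<alpha> i j) * ?P i j u v)"
      by (simp add: \<alpha>[OF len(2,1)] cnj_sym_placement_pauli_comb)
    finally have "2 * \<rho> u v = (\<Sum>i<nA. \<Sum>j\<le>N. (\<alpha> i j + cnj (\<alpha> i j)) * ?P i j u v)"
      using \<alpha>[OF len] by (simp add: distrib_right sum.distrib)
    also have "\<dots> = 2 * (\<Sum>i<nA. \<Sum>j\<le>N. complex_of_real (Re (\<alpha> i j)) * ?P i j u v)"
      by (simp add: complex_add_cnj sum_distrib_left mult.assoc)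
    finally show ?thesis by simp
  qed
  then show ?thesis
    unfolding op_eq_def lms_expansion_def
    by (intro exI[of _ "\<lambda>i j. Re (\<alpha> i j)"] allI impI) blast
qed


section \<open>The triangular family of settings\<close>

lemma card_triangle: "card {(j, k). j + k \<le> (N::nat)} = (N + 1) * (N + 2) div 2"
proof -
  have "2 * card {(j, k). j + k \<le> (N::nat)} = (N + 1) * (N + 2)"
  proof (induction N)
    case 0
    have "{(j, k). j + k \<le> (0::nat)} = {(0, 0)}" by auto
    then show ?case by simp
  next
    case (Suc N)
    have "{(j, k). j + k \<le> Suc N} = {(j, k). j + k \<le> N} \<union> (\<lambda>j. (j, Suc N - j)) ` {..Suc N}"
      by (auto simp: image_iff)
    moreover have "finite {(j, k). j + k \<le> (N::nat)}"
      by (rule finite_subset[of _ "{..N} \<times> {..N}"]) auto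
    moreover have "{(j, k). j + k \<le> N} \<inter> (\<lambda>j. (j, Suc N - j)) ` {..Suc N} = {}" by auto
    moreover have "inj_on (\<lambda>j. (j, Suc N - j)) {..Suc N}" by (auto simp: inj_on_def)
    ultimately have "card {(j, k). j + k \<le> Suc N} = card {(j, k). j + k \<le> (N::nat)} + Suc (Suc N)"
      by (simp add: card_Un_disjoint card_image)
    then show ?case using Suc.IH by simp
  qed
  then show ?thesis by simp
qed

lemma triangular_settings_exist: "\<exists>b c d. triangular_settings N ((N + 1) * (N + 2) div 2) b c d"
proof -
  let ?T = "{(j, k). j + k \<le> N}"
  have "finite ?T" by (rule finite_subset[of _ "{..N} \<times> {..N}"]) auto
  then obtain e where e: "e ` {0..<card ?T} = ?T"
    using ex_bij_betw_nat_finite[of ?T] unfolding bij_betw_def by blast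
  have "triangular_settings N ((N + 1) * (N + 2) div 2)
      (\<lambda>i. real (fst (e i))) (\<lambda>i. real (snd (e i))) (\<lambda>i. 1)"
    unfolding triangular_settings_def
  proof (intro exI[of _ real] conjI allI impI)
    fix j k assume "j + k \<le> N"
    then have "(j, k) \<in> e ` {0..<card ?T}" using e by simp
    then obtain i where "i < card ?T" "e i = (j, k)" by auto
    then show "\<exists>i<(N + 1) * (N + 2) div 2. real (fst (e i)) = real j \<and> real (snd (e i)) = real k \<and> 1 = 1"
      unfolding card_triangle by auto
  qed (auto simp: inj_on_def)
  then show ?thesis by blast
qed

theorem theorem2:
  fixes N :: nat
  assumes "N \<ge> 1"
  shows "(\<exists>b c d :: nat \<Rightarrow> real.
            \<forall>\<rho>. perm_invariant N \<rho> \<and> hermitian_op N \<rho> \<longrightarrow>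
              (\<exists>\<alpha>. op_eq N \<rho> (lms_expansion N ((N + 1) * (N + 2) div 2) b c d \<alpha>)))
       \<and> (\<forall>\<rho>. perm_invariant N \<rho> \<and> hermitian_op N \<rho> \<longrightarrow>
              meas_complexity N \<rho> \<le> (N + 1) * (N + 2) div 2)"
proof -
  obtain b c d where settings: "triangular_settings N ((N + 1) * (N + 2) div 2) b c d"
    using triangular_settings_exist by blast
  have expansion: "\<exists>\<alpha>. op_eq N \<rho> (lms_expansion N ((N + 1) * (N + 2) div 2) b c d \<alpha>)"
    if "perm_invariant N \<rho>" "hermitian_op N \<rho>" for \<rho>
    using hermitian_lms_span_real_expansion lms_span_perm_invariant[OF settings] that by blast
  then have "meas_complexity N \<rho> \<le> (N + 1) * (N + 2) div 2"
    if "perm_invariant N \<rho>" "hermitian_op N \<rho>" for \<rho>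
    unfolding meas_complexity_def using that by (blast intro: Least_le)
  with expansion show ?thesis by blast
qed

end
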